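(* There exist two winners with endowments $w_1>w_2>0$, queue scores $r_1>r_2$, and a budget $B\in(w_1-w_2,w_1]$ such that the queue rule violates monotonicity, namely $s'_1<s'_2$, where $s'_i=w_i-x_i$ is the post-ADL surviving endowment and $x_i$ the amount seized.
   Context: Winners have haircutable endowments $w_i>0$ and ranking scores $r_i$. The queue rule with budget $B$ works as follows: - It processes winners in decreasing order of score. - Each processed winner $j$ has $x_j=\min\{w_j,\text{remaining budget}\}$ seized. - The seized amount is subtracted from the remaining budget, which starts at $B$. *)

theory Defs
  imports Complex_Main
begin

fun queue_seize :: "real \<Rightarrow> (nat \<Rightarrow> real) \<Rightarrow> nat list \<Rightarrow> (nat \<Rightarrow> real)" where
  "queue_seize B w [] = (\<lambda>_. 0)"
| "queue_seize B w (j # js) =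
     (let x = min (w j) B in (queue_seize (B - x) w js)(j := x))"

definition queue_order :: "(nat \<Rightarrow> real) \<Rightarrow> nat set \<Rightarrow> nat list" where
  "queue_order r I = rev (sort_key r (sorted_list_of_set I))"

definition queue_rule :: "real \<Rightarrow> (nat \<Rightarrow> real) \<Rightarrow> (nat \<Rightarrow> real) \<Rightarrow> nat set \<Rightarrow> (nat \<Rightarrow> real)" where
  "queue_rule B w r I = queue_seize B w (queue_order r I)"

end

theory Submission
  imports Defs
begin

text \<open>When the budget does not exceed the top-ranked winner's endowment, the queue
  seizes the whole budget from that winner and nothing from the other. Her surviving
  endowment w_1 - B then falls below the untouched w_2 exactly when B > w_1 - w_2, so
  every budget in (w_1 - w_2, w_1] reverses the ranking of survivors.\<close>

lemma queue_order_pair: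
  assumes "r i > r j"
  shows "queue_order r {i, j} = [i, j]"
proof -
  have "i \<noteq> j" using assms by auto
  then consider "i < j" | "j < i" by linarith
  then show ?thesis
    by cases (use assms in \<open>simp_all add: queue_order_def insort_key_left_comm\<close>)
qed

lemma queue_rule_pair:
  assumes "r i > r j"
  shows "queue_rule B w r {i, j} i = min (w i) B"
    and "queue_rule B w r {i, j} j = min (w j) (B - min (w i) B)"
  using assms by (auto simp: queue_rule_def queue_order_pair Let_def)

lemma queue_rule_pair_not_monotone:
  assumes "r i > r j" and "w i - w j < B" and "B \<le> w i"
  shows "w i - queue_rule B w r {i, j} i < w j - queue_rule B w r {i, j} j"
  using assms by (simp add: queue_rule_pair min_def)

theorem mainTheorem7:
  shows "\<exists>(w :: nat \<Rightarrow> real) (r :: nat \<Rightarrow> real) (B :: real).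
           w 1 > w 2 \<and> w 2 > 0 \<and> r 1 > r 2 \<and> w 1 - w 2 < B \<and> B \<le> w 1 \<and>
           (let x = queue_rule B w r {1, 2} in w 1 - x 1 < w 2 - x 2)"
proof (intro exI conjI)
  let ?w = "\<lambda>i::nat. if i = 1 then (2::real) else 1"
  let ?r = "\<lambda>i::nat. if i = 1 then (1::real) else 0"
  show "?w 1 > ?w 2" "?w 2 > 0" "?r 1 > ?r 2" "?w 1 - ?w 2 < 2" "2 \<le> ?w 1" by simp_all
  then show "let x = queue_rule 2 ?w ?r {1, 2} in ?w 1 - x 1 < ?w 2 - x 2"
    unfolding Let_def by (intro queue_rule_pair_not_monotone)
qed

end
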